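(* For $\ell\in\mathbb N_0$ and $z>1$ let $\phi_\ell(z)=\int_{-1}^1\frac{P_\ell(y)}{y+z}dy$. Then: (i) for every $z>1$, $\phi_1(z)<\phi_3(z)<\phi_5(z)<\dots<0$; (ii) for odd $\ell$, $z\mapsto\phi_\ell(z)$ is smooth and strictly increasing on $(1,\infty)$, and $\phi_\ell(z)=-\frac{2^{-\ell}\int_{-1}^1(1-y^2)^\ell dy}{(z-1)^{\ell+1}}(1+o(1))$ as $z\to+\infty$; (iii) for odd $\ell$, $|\phi_\ell(z)|\leqslant\frac{2^{-\ell}\int_{-1}^1(1-y^2)^\ell dy}{(z-1)^{\ell+1}}$ for all $z>1$, and $|\phi_\ell(z)|\leqslant\frac{C_\ell\,2^{-\ell}\int_{-1}^1(1-y^2)^\ell dy}{z^{\ell+1}}$ for all $z>1+m^*$, where $C_\ell=\frac{2^\ell(1+m^* )^{\ell+1}\int_{-1}^1\frac{-P_\ell(y)}{y+1+m^*}dy}{\int_{-1}^1(1-y^2)^\ell dy}$.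
   Context: $P_\ell(y)=\frac{1}{2^\ell\ell!}\frac{d^\ell}{dy^\ell}(y^2-1)^\ell$ is the $\ell$-th Legendre polynomial. $m^*>0$ is the unique root of $\Lambda(m)=1$, where $\Lambda(m)=\frac{2}{\pi}(m+1)^2\big(\frac{1}{\sqrt{m(m+2)}}-\arcsin\frac{1}{m+1}\big)$ (numerically $m^*\approx(13.607)^{-1}$). *)

theory Defs
  imports "HOL-Analysis.Analysis" "HOL-Computational_Algebra.Polynomial" "HOL-Library.Landau_Symbols"
begin

definition legendre_poly :: "nat \<Rightarrow> real poly" where
  "legendre_poly l = smult (1 / (2 ^ l * fact l)) ((pderiv ^^ l) ([:-1, 0, 1:] ^ l))"

definition legendre :: "nat \<Rightarrow> real \<Rightarrow> real" where
  "legendre l y = poly (legendre_poly l) y"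

definition phi :: "nat \<Rightarrow> real \<Rightarrow> real" where
  "phi l z = integral {-1..1} (\<lambda>y. legendre l y / (y + z))"

definition Lambda :: "real \<Rightarrow> real" where
  "Lambda m = 2 / pi * (m + 1)^2 * (1 / sqrt (m * (m + 2)) - arcsin (1 / (m + 1)))"

text \<open>m* : the unique positive root of Lambda(m) = 1.\<close>
definition mstar :: real where
  "mstar = (THE m. m > 0 \<and> Lambda m = 1)"

definition smooth_on :: "real set \<Rightarrow> (real \<Rightarrow> real) \<Rightarrow> bool" where
  "smooth_on S f \<longleftrightarrow>
     (\<forall>k. \<forall>x\<in>S. ((deriv ^^ k) f has_real_derivative (deriv ^^ Suc k) f x) (at x))"

definition Anorm :: "nat \<Rightarrow> real" where
  "Anorm l = 2 powr (- real l) * integral {-1..1} (\<lambda>y. (1 - y^2) ^ l)"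

definition Cconst :: "nat \<Rightarrow> real" where
  "Cconst l = 2 ^ l * (1 + mstar) ^ (l + 1) * integral {-1..1} (\<lambda>y. - legendre l y / (y + 1 + mstar))
              / integral {-1..1} (\<lambda>y. (1 - y^2) ^ l)"

end

theory Submission
  imports Defs "HOL-Real_Asymp.Real_Asymp"
begin

(*
  Rodrigues' formula and l integrations by parts (the boundary terms vanish because (y^2 - 1)^l has
  zeros of order l at -1 and 1) turn phi_l(z) into 2^-l times the integral of
  (y^2 - 1)^l / (y + z)^(l + 1); for odd l this is -2^-l Psi_l(z) with a positive integrand.
  Everything else compares integrands pointwise: (1 - y^2)^2 < 4 (y + z)^2 gives (i); the integrand
  decreases in z, and z - 1 <= y + z <= z + 1 gives the bounds and the asymptotics. The substitution
  y -> -y turns the integrand of z^(l + 1) Psi_l(z) into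
  (1 - y^2)^l ((1 + y/z)^-(l + 1) + (1 - y/z)^-(l + 1)), which increases with |y|/z, so
  z^(l + 1) Psi_l(z) decreases in z; evaluated at z = 1 + m* this is the constant C_l. That m* > 0
  holds because Lambda is strictly decreasing and Lambda(1/40) > 1 > Lambda(1).
  Smoothness is differentiation under the integral sign.
*)

lemma has_real_derivative_div_power:
  fixes f g :: "real \<Rightarrow> real"
  assumes f: "(f has_real_derivative f') (at y within S)"
    and g: "(g has_real_derivative g') (at y within S)" and nz: "g y \<noteq> 0"
  shows "((\<lambda>y. f y / g y ^ (k + 1)) has_real_derivative
          f' / g y ^ (k + 1) - (k + 1) * g' * (f y / g y ^ (k + 2))) (at y within S)"
proof -
  have "((\<lambda>y. f y / g y ^ Suc k) has_real_derivative
      (f' * g y ^ Suc k - f y * ((1 + real k) * (g' * g y ^ k))) / (g y ^ Suc k * g y ^ Suc k)) (at y within S)"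
    by (rule DERIV_divide[OF f DERIV_power_Suc[OF g] power_not_zero[OF nz]])
  moreover have "(f' * g y ^ Suc k - f y * ((1 + real k) * (g' * g y ^ k))) / (g y ^ Suc k * g y ^ Suc k)
      = f' / g y ^ (k + 1) - (real k + 1) * g' * (f y / g y ^ (k + 2))"
    using nz by (simp add: field_simps power_add)
  ultimately show ?thesis
    by (simp only: Suc_eq_plus1)
qed

lemma power_dvd_higher_pderiv_power:
  fixes p :: "'a::idom poly"
  assumes "j \<le> l"
  shows "p ^ (l - j) dvd (pderiv ^^ j) (p ^ l)"
  using assms
proof (induction j)
  case 0
  then show ?case by simp
next
  case (Suc j)
  then obtain s where s: "(pderiv ^^ j) (p ^ l) = p ^ (l - j) * s"
    by (auto elim: dvdE)
  obtain n where n: "l - j = Suc n" "l - Suc j = n"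
    using Suc.prems by (metis Suc_diff_Suc Suc_le_lessD diff_Suc_1)
  have "(pderiv ^^ Suc j) (p ^ l) = pderiv (p ^ Suc n * s)"
    using s n by simp
  also have "\<dots> = p ^ n * (p * pderiv s + smult (of_nat (Suc n)) (pderiv p * s))"
    by (simp only: pderiv_mult pderiv_power_Suc) (simp add: algebra_simps)
  finally show ?case
    using n by simp
qed

lemma poly_higher_pderiv_power_eq_0:
  fixes p :: "'a::idom poly"
  assumes "poly p a = 0" and "j < l"
  shows "poly ((pderiv ^^ j) (p ^ l)) a = 0"
proof -
  obtain s where "(pderiv ^^ j) (p ^ l) = p ^ (l - j) * s"
    using power_dvd_higher_pderiv_power[of j l p] assms(2) by (auto elim: dvdE)
  then show ?thesis
    using assms by (simp add: poly_power zero_power)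
qed

lemma integral_pderiv_div_power:
  fixes p :: "real poly"
  assumes "a \<le> b" and "a + z > 0" and "poly p a = 0" and "poly p b = 0"
  shows "integral {a..b} (\<lambda>y. poly (pderiv p) y / (y + z) ^ (k + 1))
       = (real k + 1) * integral {a..b} (\<lambda>y. poly p y / (y + z) ^ (k + 2))"
proof -
  define F where "F y = poly p y / (y + z) ^ (k + 1)" for y
  define F' where
    "F' y = poly (pderiv p) y / (y + z) ^ (k + 1) - (real k + 1) * (poly p y / (y + z) ^ (k + 2))" for y
  have pos: "y + z > 0" if "y \<in> {a..b}" for y
    using that assms(2) by auto
  have "(F' has_integral F b - F a) {a..b}"
  proof (rule fundamental_theorem_of_calculus[OF assms(1)])
    fix y assume y: "y \<in> {a..b}"
    have nz: "y + z \<noteq> 0"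
      using pos[OF y] by simp
    have "((\<lambda>y. y + z) has_real_derivative 1) (at y)"
      by (auto intro!: derivative_eq_intros)
    from has_real_derivative_div_power[where k=k, OF poly_DERIV this nz]
    have "(F has_real_derivative F' y) (at y)"
      unfolding F_def F'_def by (simp only: mult_1_right)
    then show "(F has_vector_derivative F' y) (at y within {a..b})"
      by (simp add: has_real_derivative_iff_has_vector_derivative has_vector_derivative_at_within)
  qed
  then have "integral {a..b} F' = 0"
    using assms(3,4) by (simp add: F_def integral_unique)
  moreover have "(\<lambda>y. poly (pderiv p) y / (y + z) ^ (k + 1)) integrable_on {a..b}"
    "(\<lambda>y. (real k + 1) * (poly p y / (y + z) ^ (k + 2))) integrable_on {a..b}"
    by (intro integrable_continuous_interval continuous_intros; use pos in force)+
  ultimately show ?thesis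
    unfolding F'_def by (simp only: integral_diff integral_mult_right)
qed

lemma integral_higher_pderiv_power_div:
  fixes p :: "real poly"
  assumes "a \<le> b" and "a + z > 0" and "poly p a = 0" and "poly p b = 0" and "k \<le> l"
  shows "integral {a..b} (\<lambda>y. poly ((pderiv ^^ l) (p ^ l)) y / (y + z))
       = fact k * integral {a..b} (\<lambda>y. poly ((pderiv ^^ (l - k)) (p ^ l)) y / (y + z) ^ (k + 1))"
  using assms(5)
proof (induction k)
  case 0
  then show ?case by simp
next
  case (Suc k)
  define q where "q = (pderiv ^^ (l - Suc k)) (p ^ l)"
  have "(pderiv ^^ (l - k)) (p ^ l) = pderiv q"
    using Suc.prems by (simp add: q_def Suc_diff_Suc[symmetric])
  moreover have "poly q a = 0" "poly q b = 0"
    using Suc.prems assms(3,4) by (auto simp: q_def intro: poly_higher_pderiv_power_eq_0)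
  ultimately show ?case
    using Suc integral_pderiv_div_power[OF assms(1,2), of q k] by (simp add: q_def algebra_simps)
qed

lemma phi_eq_integral_power:
  assumes "z > 1"
  shows "phi l z = integral {-1..1} (\<lambda>y. (y\<^sup>2 - 1) ^ l / (y + z) ^ (l + 1)) / 2 ^ l"
proof -
  let ?p = "[:-1, 0, 1:] :: real poly"
  have "phi l z = integral {-1..1} (\<lambda>y. poly ((pderiv ^^ l) (?p ^ l)) y / (y + z)) / (2 ^ l * fact l)"
    unfolding phi_def legendre_def legendre_poly_def
    by (simp add: integral_divide[symmetric] field_simps)
  also have "\<dots> = integral {-1..1} (\<lambda>y. poly (?p ^ l) y / (y + z) ^ (l + 1)) / 2 ^ l"
    using integral_higher_pderiv_power_div[of "-1" 1 z ?p l l] assms by simp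
  finally show ?thesis
    by (simp add: poly_power power2_eq_square algebra_simps)
qed

definition Psi :: "nat \<Rightarrow> real \<Rightarrow> real" where
  "Psi l z = integral {-1..1} (\<lambda>y. (1 - y\<^sup>2) ^ l / (y + z) ^ (l + 1))"

lemma phi_eq_neg_Psi:
  assumes "odd l" and "z > 1"
  shows "phi l z = - (Psi l z / 2 ^ l)"
proof -
  have "(y\<^sup>2 - 1) ^ l = - ((1 - y\<^sup>2) ^ l)" for y :: real
    using power_minus_odd[OF assms(1), of "1 - y\<^sup>2"] by simp
  then show ?thesis
    by (simp add: phi_eq_integral_power[OF assms(2)] Psi_def integral_neg)
qed

lemma one_minus_square_pos:
  fixes y :: real
  assumes "y \<in> {-1<..<1}"
  shows "0 < 1 - y\<^sup>2"
  using assms by (simp add: abs_square_less_1 abs_less_iff)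

lemma one_minus_square_nonneg:
  fixes y :: real
  assumes "y \<in> {-1..1}"
  shows "0 \<le> 1 - y\<^sup>2"
  using assms by (simp add: abs_square_le_1 abs_le_iff)

lemma continuous_on_weight_div_power:
  "z > 1 \<Longrightarrow> continuous_on {-1..1} (\<lambda>y::real. (1 - y\<^sup>2) ^ n / (y + z) ^ m)"
  by (intro continuous_intros) auto

lemma Psi_pos:
  assumes "z > 1"
  shows "0 < Psi l z"
proof -
  have "integral {-1..1} (\<lambda>y::real. 0) < Psi l z"
    unfolding Psi_def
  proof (rule integral_less_real)
    show "continuous_on {-1..1} (\<lambda>y. (1 - y\<^sup>2) ^ l / (y + z) ^ (l + 1))"
      by (rule continuous_on_weight_div_power) (use assms in linarith)
  qed (use assms one_minus_square_pos in auto)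
  then show ?thesis by simp
qed

lemma Psi_add_2_less:
  assumes z: "z > 1"
  shows "Psi (l + 2) z < 4 * Psi l z"
proof -
  have "Psi (l + 2) z < integral {-1..1} (\<lambda>y. 4 * ((1 - y\<^sup>2) ^ l / (y + z) ^ (l + 1)))"
    unfolding Psi_def
  proof (rule integral_less_real)
    fix y :: real assume y: "y \<in> {-1<..<1}"
    define a w where "a = 1 - y\<^sup>2" and "w = y + z"
    have "a = (1 - y) * (1 + y)"
      unfolding a_def by (simp add: power2_eq_square algebra_simps)
    also have "\<dots> < 2 * (1 + y)"
      using y by (intro mult_strict_right_mono) auto
    also have "\<dots> < 2 * w"
      using z by (simp add: w_def)
    finally have "a < 2 * w" .
    moreover have a: "0 < a" and w: "0 < w"
      using one_minus_square_pos[OF y] y z by (auto simp: a_def w_def)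
    ultimately have "(a / w)\<^sup>2 < 2\<^sup>2"
      by (intro power_strict_mono) (auto simp: field_simps)
    then have "a ^ l / w ^ (l + 1) * (a / w)\<^sup>2 < a ^ l / w ^ (l + 1) * 4"
      using a w by (intro mult_strict_left_mono) simp_all
    moreover have "a ^ (l + 2) / w ^ (l + 2 + 1) = a ^ l / w ^ (l + 1) * (a / w)\<^sup>2"
      using w by (simp add: power_add power2_eq_square field_simps)
    ultimately show "a ^ (l + 2) / w ^ (l + 2 + 1) < 4 * (a ^ l / w ^ (l + 1))"
      by (simp only: mult.commute)
  qed (rule continuous_on_weight_div_power[OF z]
      | intro continuous_on_mult continuous_on_const continuous_on_weight_div_power[OF z] | simp)+
  then show ?thesis
    by (simp only: Psi_def integral_mult_right)
qed

lemma Psi_strict_antimono: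
  assumes "1 < z" and "z < z'"
  shows "Psi l z' < Psi l z"
  unfolding Psi_def
proof (rule integral_less_real)
  fix y :: real assume y: "y \<in> {-1<..<1}"
  have "(y + z) ^ (l + 1) < (y + z') ^ (l + 1)"
    using y assms by (intro power_strict_mono) auto
  then show "(1 - y\<^sup>2) ^ l / (y + z') ^ (l + 1) < (1 - y\<^sup>2) ^ l / (y + z) ^ (l + 1)"
    using one_minus_square_pos[OF y] y assms by (intro divide_strict_left_mono) auto
qed (use continuous_on_weight_div_power assms in \<open>auto simp del: power_Suc Suc_eq_plus1\<close>)

lemma Psi_upper_bound:
  assumes "z > 1"
  shows "Psi l z \<le> integral {-1..1} (\<lambda>y. (1 - y\<^sup>2) ^ l) / (z - 1) ^ (l + 1)"
proof -
  have "Psi l z \<le> integral {-1..1} (\<lambda>y. (1 - y\<^sup>2) ^ l / (z - 1) ^ (l + 1))"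
    unfolding Psi_def
  proof (rule integral_le)
    fix y :: real assume y: "y \<in> {-1..1}"
    have "(z - 1) ^ (l + 1) \<le> (y + z) ^ (l + 1)"
      using y assms by (intro power_mono) auto
    then show "(1 - y\<^sup>2) ^ l / (y + z) ^ (l + 1) \<le> (1 - y\<^sup>2) ^ l / (z - 1) ^ (l + 1)"
      using one_minus_square_nonneg[OF y] y assms by (intro divide_left_mono mult_pos_pos zero_less_power) auto
  qed (use assms continuous_on_weight_div_power[of z _ 0] in
      \<open>auto intro!: integrable_continuous_interval continuous_intros\<close>)
  then show ?thesis by simp
qed

lemma Psi_lower_bound:
  assumes "z > 1"
  shows "integral {-1..1} (\<lambda>y. (1 - y\<^sup>2) ^ l) / (z + 1) ^ (l + 1) \<le> Psi l z"
proof -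
  have "integral {-1..1} (\<lambda>y. (1 - y\<^sup>2) ^ l / (z + 1) ^ (l + 1)) \<le> Psi l z"
    unfolding Psi_def
  proof (rule integral_le)
    fix y :: real assume y: "y \<in> {-1..1}"
    have "(y + z) ^ (l + 1) \<le> (z + 1) ^ (l + 1)"
      using y assms by (intro power_mono) auto
    then show "(1 - y\<^sup>2) ^ l / (z + 1) ^ (l + 1) \<le> (1 - y\<^sup>2) ^ l / (y + z) ^ (l + 1)"
      using one_minus_square_nonneg[OF y] y assms by (intro divide_left_mono mult_pos_pos zero_less_power) auto
  qed (use assms continuous_on_weight_div_power[of z _ 0] in
      \<open>auto intro!: integrable_continuous_interval continuous_intros\<close>)
  then show ?thesis by simp
qed

lemma weight_integral_pos: "0 < integral {-1..1} (\<lambda>y::real. (1 - y\<^sup>2) ^ l)"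
proof -
  have "integral {-1..1} (\<lambda>y::real. 0) < integral {-1..1} (\<lambda>y::real. (1 - y\<^sup>2) ^ l)"
    by (rule integral_less_real) (use one_minus_square_pos in \<open>auto intro!: continuous_intros\<close>)
  then show ?thesis by simp
qed

lemma Anorm_eq: "Anorm l = integral {-1..1} (\<lambda>y. (1 - y\<^sup>2) ^ l) / 2 ^ l"
  by (simp add: Anorm_def powr_minus powr_realpow divide_inverse mult.commute)

lemma reciprocal_power_sum_mono_nonneg:
  fixes x x' :: real
  assumes "0 \<le> x" and "x \<le> x'" and "x' < 1"
  shows "1 / (1 + x) ^ n + 1 / (1 - x) ^ n \<le> 1 / (1 + x') ^ n + 1 / (1 - x') ^ n"
proof (cases n)
  case 0
  then show ?thesis by simp
next
  case (Suc m)
  show ?thesis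
  proof (rule DERIV_nonneg_imp_nondecreasing[OF assms(2)])
    fix t assume t: "x \<le> t" "t \<le> x'"
    then have tp: "1 + t > 0" "1 - t > 0" using assms by auto
    have expand: "0 / a - (real m + 1) * 1 * b + (0 / c - (real m + 1) * (-1) * d) = (real m + 1) * (d - b)"
      for a b c d :: real
      by (simp add: algebra_simps)
    have "((\<lambda>t. 1 + t) has_real_derivative 1) (at t)" "((\<lambda>t. 1 - t) has_real_derivative -1) (at t)"
      by (auto intro!: derivative_eq_intros)
    from DERIV_add[OF has_real_derivative_div_power[where f="\<lambda>_. 1" and k=m, OF DERIV_const this(1)]
        has_real_derivative_div_power[where f="\<lambda>_. 1" and k=m, OF DERIV_const this(2)]] tp
    have "((\<lambda>t. 1 / (1 + t) ^ (m + 1) + 1 / (1 - t) ^ (m + 1)) has_real_derivative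
        (0 / (1 + t) ^ (m + 1) - (real m + 1) * 1 * (1 / (1 + t) ^ (m + 2)))
        + (0 / (1 - t) ^ (m + 1) - (real m + 1) * (-1) * (1 / (1 - t) ^ (m + 2)))) (at t)"
      by simp
    then have "((\<lambda>t. 1 / (1 + t) ^ n + 1 / (1 - t) ^ n) has_real_derivative
        (real m + 1) * (1 / (1 - t) ^ (m + 2) - 1 / (1 + t) ^ (m + 2))) (at t)"
      unfolding expand Suc Suc_eq_plus1 .
    moreover have "1 / (1 + t) ^ (m + 2) \<le> 1 / (1 - t) ^ (m + 2)"
      using tp t assms by (intro divide_left_mono power_mono mult_pos_pos zero_less_power) auto
    then have "0 \<le> (real m + 1) * (1 / (1 - t) ^ (m + 2) - 1 / (1 + t) ^ (m + 2))"
      by (intro mult_nonneg_nonneg) simp_all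
    ultimately show "\<exists>d. ((\<lambda>t. 1 / (1 + t) ^ n + 1 / (1 - t) ^ n) has_real_derivative d) (at t) \<and> 0 \<le> d"
      by blast
  qed
qed

lemma phi_neg:
  assumes "odd l" and "z > 1"
  shows "phi l z < 0"
  using Psi_pos[OF assms(2), of l] by (simp add: phi_eq_neg_Psi[OF assms])

lemma phi_less_phi_add_2:
  assumes "odd l" and "z > 1"
  shows "phi l z < phi (l + 2) z"
proof -
  have "Psi (l + 2) z / 2 ^ (l + 2) < 4 * Psi l z / 2 ^ (l + 2)"
    using Psi_add_2_less[OF assms(2)] by (intro divide_strict_right_mono) simp_all
  also have "\<dots> = Psi l z / 2 ^ l"
    by (simp add: power_add)
  finally show ?thesis
    using phi_eq_neg_Psi[OF assms] phi_eq_neg_Psi[of "l + 2" z] assms by simp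
qed

lemma strict_mono_on_phi:
  assumes "odd l"
  shows "strict_mono_on {1<..} (phi l)"
proof (rule strict_mono_onI)
  fix z z' :: real assume "z \<in> {1<..}" "z' \<in> {1<..}" "z < z'"
  then show "phi l z < phi l z'"
    using Psi_strict_antimono[of z z' l] assms
    by (simp add: phi_eq_neg_Psi divide_strict_right_mono)
qed

lemma abs_phi_eq:
  assumes "odd l" and "z > 1"
  shows "\<bar>phi l z\<bar> = Psi l z / 2 ^ l"
  using Psi_pos[OF assms(2), of l] by (simp add: phi_eq_neg_Psi[OF assms])

lemma abs_phi_le:
  assumes "odd l" and "z > 1"
  shows "\<bar>phi l z\<bar> \<le> Anorm l / (z - 1) ^ (l + 1)"
  using divide_right_mono[OF Psi_upper_bound[OF assms(2), of l], of "2 ^ l"]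
  by (simp add: abs_phi_eq[OF assms] Anorm_eq field_simps)

lemma phi_asymp_equiv:
  assumes "odd l"
  shows "phi l \<sim>[at_top] (\<lambda>z. - Anorm l / (z - 1) ^ (l + 1))"
proof (rule asymp_equivI')
  define W where "W = integral {-1..1} (\<lambda>y::real. (1 - y\<^sup>2) ^ l)"
  have W: "W > 0"
    unfolding W_def by (rule weight_integral_pos)
  have ratio: "phi l z / (- Anorm l / (z - 1) ^ (l + 1)) = Psi l z * (z - 1) ^ (l + 1) / W"
    if "z > 1" for z
    using that W by (simp add: phi_eq_neg_Psi[OF assms] Anorm_eq W_def[symmetric] field_simps)
  have lim: "((\<lambda>z::real. ((z - 1) / (z + 1)) ^ (l + 1)) \<longlongrightarrow> 1) at_top"
    by real_asymp
  have lower: "\<forall>\<^sub>F z in at_top. ((z - 1) / (z + 1)) ^ (l + 1)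
      \<le> phi l z / (- Anorm l / (z - 1) ^ (l + 1))"
    using eventually_gt_at_top[of 1]
  proof eventually_elim
    case (elim z)
    have "((z - 1) / (z + 1)) ^ (l + 1) = W / (z + 1) ^ (l + 1) * ((z - 1) ^ (l + 1) / W)"
      using W by (simp add: power_divide)
    also have "\<dots> \<le> Psi l z * ((z - 1) ^ (l + 1) / W)"
      using Psi_lower_bound[OF elim, of l] W elim unfolding W_def by (intro mult_right_mono) auto
    finally show ?case
      unfolding ratio[OF elim] by simp
  qed
  have upper: "\<forall>\<^sub>F z in at_top. phi l z / (- Anorm l / (z - 1) ^ (l + 1)) \<le> 1"
    using eventually_gt_at_top[of 1]
  proof eventually_elim
    case (elim z)
    then show ?case
      unfolding ratio[OF elim] using Psi_upper_bound[OF elim, of l] W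
      by (simp add: W_def[symmetric] field_simps)
  qed
  show "((\<lambda>z. phi l z / (- Anorm l / (z - 1) ^ (l + 1))) \<longlongrightarrow> 1) at_top"
    by (rule tendsto_sandwich[OF lower upper lim tendsto_const])
qed

lemma power_mult_Psi_symmetrised:
  assumes z: "z > 1"
  shows "2 * (z ^ (l + 1) * Psi l z)
       = integral {-1..1} (\<lambda>y. (1 - y\<^sup>2) ^ l * (1 / (1 + y / z) ^ (l + 1) + 1 / (1 - y / z) ^ (l + 1)))"
proof -
  define K where "K y = (1 - y\<^sup>2) ^ l * (1 / (1 + y / z) ^ (l + 1))" for y
  have pos: "0 < 1 + y / z" "0 < 1 - y / z" if "y \<in> {-1..1}" for y
    using that z by (auto simp: field_simps)
  have cont: "continuous_on {-1..1} K" "continuous_on {-1..1} (\<lambda>y. K (- y))"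
    unfolding K_def by (intro continuous_intros; use pos z in force)+
  have "z ^ (l + 1) * Psi l z = integral {-1..1} K"
    unfolding Psi_def integral_mult_right[symmetric]
  proof (rule integral_cong)
    fix y :: real assume "y \<in> {-1..1}"
    then have "y + z = z * (1 + y / z)"
      using z by (simp add: field_simps)
    then show "z ^ (l + 1) * ((1 - y\<^sup>2) ^ l / (y + z) ^ (l + 1)) = K y"
      using z by (simp add: K_def power_mult_distrib)
  qed
  moreover have "integral {-1..1} K = integral {-1..1} (\<lambda>y. K (- y))"
    using Henstock_Kurzweil_Integration.integral_reflect_real[where a = "-1" and b = 1 and f = K] by simp
  ultimately have "2 * (z ^ (l + 1) * Psi l z) = integral {-1..1} (\<lambda>y. K y + K (- y))"
    using cont by (simp add: integral_add integrable_continuous_interval)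
  then show ?thesis
    by (simp add: K_def distrib_left)
qed

lemma reciprocal_power_sum_mono:
  fixes x x' :: real
  assumes "\<bar>x\<bar> \<le> \<bar>x'\<bar>" and "\<bar>x'\<bar> < 1"
  shows "1 / (1 + x) ^ n + 1 / (1 - x) ^ n \<le> 1 / (1 + x') ^ n + 1 / (1 - x') ^ n"
proof -
  define g where "g x = 1 / (1 + x) ^ n + 1 / (1 - x) ^ n" for x :: real
  have even: "g (\<bar>x\<bar>) = g x" for x
    by (cases "x \<ge> 0") (auto simp: g_def)
  have "g \<bar>x\<bar> \<le> g \<bar>x'\<bar>"
    unfolding g_def using assms by (intro reciprocal_power_sum_mono_nonneg) auto
  then have "g x \<le> g x'"
    by (simp only: even)
  then show ?thesis
    by (simp only: g_def)
qed

lemma power_mult_Psi_antimono: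
  assumes c: "1 < c" and "c \<le> z"
  shows "z ^ (l + 1) * Psi l z \<le> c ^ (l + 1) * Psi l c"
proof -
  have z: "1 < z"
    using assms by simp
  have cont: "continuous_on {-1..1}
      (\<lambda>y. (1 - y\<^sup>2) ^ l * (1 / (1 + y / w) ^ (l + 1) + 1 / (1 - y / w) ^ (l + 1)))" if "1 < w" for w :: real
  proof -
    have pos: "0 < 1 + y / w" "0 < 1 - y / w" if "y \<in> {-1..1}" for y
      using that \<open>1 < w\<close> by (auto simp: field_simps)
    show ?thesis
      by (intro continuous_intros) (use pos that in force)+
  qed
  have "integral {-1..1} (\<lambda>y. (1 - y\<^sup>2) ^ l * (1 / (1 + y / z) ^ (l + 1) + 1 / (1 - y / z) ^ (l + 1)))
      \<le> integral {-1..1} (\<lambda>y. (1 - y\<^sup>2) ^ l * (1 / (1 + y / c) ^ (l + 1) + 1 / (1 - y / c) ^ (l + 1)))"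
  proof (rule integral_le)
    fix y :: real assume y: "y \<in> {-1..1}"
    have "\<bar>y / z\<bar> \<le> \<bar>y / c\<bar>" "\<bar>y / c\<bar> < 1"
      using y assms by (auto simp: field_simps abs_divide intro: mult_right_mono)
    then show "(1 - y\<^sup>2) ^ l * (1 / (1 + y / z) ^ (l + 1) + 1 / (1 - y / z) ^ (l + 1))
        \<le> (1 - y\<^sup>2) ^ l * (1 / (1 + y / c) ^ (l + 1) + 1 / (1 - y / c) ^ (l + 1))"
      using one_minus_square_nonneg[OF y] by (intro mult_left_mono reciprocal_power_sum_mono) auto
  qed (use cont z c integrable_continuous_interval in auto)
  then show ?thesis
    using power_mult_Psi_symmetrised[OF z, of l] power_mult_Psi_symmetrised[OF c, of l] by simp
qed

lemma arctan_gt_cubic: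
  fixes u :: real
  assumes u: "0 < u"
  shows "u - u ^ 3 / 2 < arctan u"
proof -
  have "0 ^ 3 - 2 * 0 + 2 * arctan 0 < u ^ 3 - 2 * u + 2 * arctan (u::real)"
  proof (rule DERIV_pos_imp_increasing_open[OF u])
    fix t :: real assume t: "0 < t" "t < u"
    have "1 + t * t \<noteq> 0"
      by (metis add_pos_nonneg zero_less_one zero_le_square less_irrefl)
    then have "((\<lambda>t. t ^ 3 - 2 * t + 2 * arctan t) has_real_derivative (3 * t ^ 4 + t\<^sup>2) / (1 + t\<^sup>2)) (at t)"
      by (auto intro!: derivative_eq_intros simp: field_simps power2_eq_square power_numeral_reduce)
    moreover have "(3 * t ^ 4 + t\<^sup>2) / (1 + t\<^sup>2) > 0"
      using t by (intro divide_pos_pos add_pos_pos) auto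
    ultimately show "\<exists>d. ((\<lambda>t. t ^ 3 - 2 * t + 2 * arctan t) has_real_derivative d) (at t) \<and> 0 < d"
      by blast
  qed (intro continuous_intros)
  then show ?thesis by simp
qed

lemma arctan_remainder_strict_mono:
  assumes "0 < u" "u < v"
  shows "(1 + 1 / u\<^sup>2) * (u - arctan u) < (1 + 1 / v\<^sup>2) * (v - arctan v)"
proof (rule DERIV_pos_imp_increasing[OF assms(2)])
  fix t :: real assume t: "u \<le> t" "t \<le> v"
  then have t0: "t > 0" using assms by simp
  have sq: "1 + t\<^sup>2 \<noteq> 0"
    by (metis add_pos_nonneg zero_less_one zero_le_power2 less_irrefl)
  have "((\<lambda>t. 1 + 1 / t\<^sup>2) has_real_derivative - 2 / t ^ 3) (at t)"
    using t0 by (auto intro!: derivative_eq_intros simp: field_simps power2_eq_square power3_eq_cube)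
  moreover have "((\<lambda>t. t - arctan t) has_real_derivative t\<^sup>2 / (1 + t\<^sup>2)) (at t)"
    using sq by (auto intro!: derivative_eq_intros simp: field_simps)
  ultimately have "((\<lambda>t. (1 + 1 / t\<^sup>2) * (t - arctan t)) has_real_derivative
      - 2 / t ^ 3 * (t - arctan t) + t\<^sup>2 / (1 + t\<^sup>2) * (1 + 1 / t\<^sup>2)) (at t)"
    by (rule DERIV_mult)
  moreover have "t\<^sup>2 / (1 + t\<^sup>2) * (1 + 1 / t\<^sup>2) = 1"
    using sq t0 by (simp add: divide_simps)
  moreover have "2 / t ^ 3 * (t - arctan t) < 1"
    using arctan_gt_cubic[OF t0] t0 by (simp add: field_simps power3_eq_cube)
  ultimately show "\<exists>d. ((\<lambda>t. (1 + 1 / t\<^sup>2) * (t - arctan t)) has_real_derivative d) (at t) \<and> 0 < d"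
    by (intro exI conjI) auto
qed

lemma Lambda_eq_arctan:
  assumes m: "m > 0"
  defines "u \<equiv> 1 / sqrt (m * (m + 2))"
  shows "Lambda m = 2 / pi * ((1 + 1 / u\<^sup>2) * (u - arctan u))"
proof -
  have mm: "m * (m + 2) > 0"
    using m by simp
  have u2: "1 / u\<^sup>2 = m * (m + 2)"
    using mm by (simp add: u_def power_divide)
  have "(m + 1)\<^sup>2 = 1 + 1 / u\<^sup>2"
    unfolding u2 by (simp add: power2_eq_square algebra_simps)
  moreover have "arcsin (1 / (m + 1)) = arctan u"
  proof -
    have "(m + 1)\<^sup>2 \<noteq> 0"
      using m by simp
    then have "1 - (1 / (m + 1))\<^sup>2 = ((m + 1)\<^sup>2 - 1) / (m + 1)\<^sup>2"
      by (simp add: power_divide diff_divide_distrib)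
    also have "(m + 1)\<^sup>2 - 1 = m * (m + 2)"
      by (simp add: power2_eq_square algebra_simps)
    finally have "1 - (1 / (m + 1))\<^sup>2 = m * (m + 2) / (m + 1)\<^sup>2" .
    then have "sqrt (1 - (1 / (m + 1))\<^sup>2) = sqrt (m * (m + 2)) / (m + 1)"
      using m by (simp add: real_sqrt_divide)
    then have "(1 / (m + 1)) / sqrt (1 - (1 / (m + 1))\<^sup>2) = u"
      using m mm by (simp add: u_def field_simps)
    moreover have "-1 < 1 / (m + 1)" "1 / (m + 1) < 1"
      using m by (auto simp: field_simps)
    ultimately show ?thesis
      using arcsin_arctan by metis
  qed
  ultimately show ?thesis
    by (simp add: Lambda_def u_def)
qed

lemma Lambda_strict_antimono:
  assumes "0 < m" and "m < m'"
  shows "Lambda m' < Lambda m"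
proof -
  have "sqrt (m * (m + 2)) < sqrt (m' * (m' + 2))"
    using assms by (simp add: mult_strict_mono)
  then have "1 / sqrt (m' * (m' + 2)) < 1 / sqrt (m * (m + 2))"
    using assms by (intro divide_strict_left_mono) auto
  then have "(1 + 1 / (1 / sqrt (m' * (m' + 2)))\<^sup>2) * (1 / sqrt (m' * (m' + 2)) - arctan (1 / sqrt (m' * (m' + 2))))
      < (1 + 1 / (1 / sqrt (m * (m + 2)))\<^sup>2) * (1 / sqrt (m * (m + 2)) - arctan (1 / sqrt (m * (m + 2))))"
    using assms by (intro arctan_remainder_strict_mono) auto
  then have "2 / pi * ((1 + 1 / (1 / sqrt (m' * (m' + 2)))\<^sup>2) * (1 / sqrt (m' * (m' + 2)) - arctan (1 / sqrt (m' * (m' + 2)))))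
      < 2 / pi * ((1 + 1 / (1 / sqrt (m * (m + 2)))\<^sup>2) * (1 / sqrt (m * (m + 2)) - arctan (1 / sqrt (m * (m + 2)))))"
    by (intro mult_strict_left_mono) simp_all
  moreover have "0 < m'"
    using assms by simp
  ultimately show ?thesis
    by (simp only: Lambda_eq_arctan[OF assms(1)] Lambda_eq_arctan[OF \<open>0 < m'\<close>])
qed

lemma Lambda_one_fortieth_gt_1: "1 < Lambda (1 / 40)"
proof -
  have sqrt_eq: "sqrt (81 / 1600) = (9 / 40 :: real)"
    by (rule real_sqrt_unique) (simp_all add: power2_eq_square)
  have "Lambda (1 / 40) = 2 / pi * (1681 / 1600) * (40 / 9 - arcsin (40 / 41))"
    unfolding Lambda_def by (simp add: sqrt_eq power2_eq_square)
  also have "\<dots> \<ge> 2 / pi * (1681 / 1600) * (40 / 9 - pi / 2)"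
    using arcsin_bounded[of "40 / 41"] by (intro mult_left_mono) auto
  finally have "Lambda (1 / 40) \<ge> (1681 / 1600) * (80 / (9 * pi) - 1)"
    by (simp add: field_simps)
  moreover have "(1681 / 1600) * (80 / (9 * pi) - 1) > 1"
    using pi_less_4 by (simp add: field_simps)
  ultimately show ?thesis
    by linarith
qed

lemma Lambda_1_lt_1: "Lambda 1 < 1"
proof -
  have s3: "17 / 10 < sqrt 3"
    by (rule real_less_rsqrt) (simp add: power2_eq_square)
  have "Lambda 1 = 8 / (pi * sqrt 3) - 4 / 3"
    unfolding Lambda_def by (simp add: arcsin_one_half field_simps)
  also have "8 / (pi * sqrt 3) < 8 / (3 * (17 / 10))"
    using pi_gt3 s3 by (intro divide_strict_left_mono mult_strict_mono) auto
  finally show ?thesis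
    by simp
qed

lemma ex1_Lambda_eq_1: "\<exists>!m. m > 0 \<and> Lambda m = 1"
proof -
  have pos: "0 < x * (x + 2)" if "x \<in> {1 / 40..1}" for x :: real
    using that mult_pos_pos[of x "x + 2"] by auto
  have bounded: "-1 \<le> 1 / (x + 1) \<and> 1 / (x + 1) \<le> 1" if "x \<in> {1 / 40..1}" for x :: real
    using that by (auto simp: field_simps)
  have "continuous_on {1 / 40..1} Lambda"
    unfolding Lambda_def by (intro continuous_intros) (use pos bounded in force)+
  then obtain m where m: "1 / 40 \<le> m" "Lambda m = 1"
    using IVT2'[of Lambda 1 1 "1 / 40"] Lambda_one_fortieth_gt_1 Lambda_1_lt_1 by force
  show ?thesis
  proof (rule ex1I)
    show "m > 0 \<and> Lambda m = 1"
      using m by simp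
  next
    fix m' assume "m' > 0 \<and> Lambda m' = 1"
    then show "m' = m"
      using m Lambda_strict_antimono[of m m'] Lambda_strict_antimono[of m' m]
      by (cases m m' rule: linorder_cases) auto
  qed
qed

lemma mstar_pos: "mstar > 0"
  using theI'[OF ex1_Lambda_eq_1] by (simp add: mstar_def)

lemma abs_phi_le_Cconst:
  assumes l: "odd l" and z: "z > 1 + mstar"
  shows "\<bar>phi l z\<bar> \<le> Cconst l * Anorm l / z ^ (l + 1)"
proof -
  define c where "c = 1 + mstar"
  define W where "W = integral {-1..1} (\<lambda>y::real. (1 - y\<^sup>2) ^ l)"
  have c: "1 < c" and cz: "c \<le> z"
    using mstar_pos z by (auto simp: c_def)
  have W: "W > 0"
    unfolding W_def by (rule weight_integral_pos)
  have "integral {-1..1} (\<lambda>y. - legendre l y / (y + 1 + mstar)) = - phi l c"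
    by (simp add: phi_def c_def integral_neg add.assoc)
  then have Cconst_eq: "Cconst l = c ^ (l + 1) * Psi l c / W"
    using phi_eq_neg_Psi[OF l c] by (simp add: Cconst_def W_def[symmetric] c_def[symmetric])
  have "\<bar>phi l z\<bar> = Psi l z / 2 ^ l"
    using c cz by (intro abs_phi_eq l) simp
  also have "\<dots> \<le> c ^ (l + 1) * Psi l c / z ^ (l + 1) / 2 ^ l"
    using power_mult_Psi_antimono[OF c cz, of l] c cz
    by (intro divide_right_mono) (simp_all add: field_simps)
  also have "\<dots> = Cconst l * Anorm l / z ^ (l + 1)"
    using W by (simp add: Cconst_eq Anorm_eq W_def[symmetric])
  finally show ?thesis .
qed

lemma has_real_derivative_integral_div_power:
  fixes f :: "real \<Rightarrow> real"
  assumes f: "continuous_on {-1..1} f" and x: "x > 1"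
  shows "((\<lambda>z. integral {-1..1} (\<lambda>y. f y / (y + z) ^ (k + 1))) has_real_derivative
          - ((real k + 1) * integral {-1..1} (\<lambda>y. f y / (y + x) ^ (k + 2)))) (at x)"
proof -
  have "((\<lambda>z. integral (cbox (-1) 1) (\<lambda>y. f y / (y + z) ^ (k + 1))) has_real_derivative
          integral (cbox (-1) 1) (\<lambda>y. - ((real k + 1) * (f y / (y + x) ^ (k + 2))))) (at x within {1<..})"
  proof (rule leibniz_rule_field_derivative)
    fix z y :: real assume "z \<in> {1<..}" "y \<in> cbox (-1) 1"
    then have nz: "y + z \<noteq> 0" by auto
    have "((\<lambda>z. y + z) has_real_derivative 1) (at z within {1<..})"
      by (auto intro!: derivative_eq_intros)
    from has_real_derivative_div_power[where f="\<lambda>_. f y" and k=k, OF DERIV_const this nz]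
    have "((\<lambda>z. f y / (y + z) ^ (k + 1)) has_real_derivative
        0 / (y + z) ^ (k + 1) - (real k + 1) * 1 * (f y / (y + z) ^ (k + 2))) (at z within {1<..})" .
    then show "((\<lambda>z. f y / (y + z) ^ (k + 1)) has_real_derivative - ((real k + 1) * (f y / (y + z) ^ (k + 2))))
        (at z within {1<..})"
      by (simp only: div_0 diff_0 mult_1_right)
  next
    fix z :: real assume "z \<in> {1<..}"
    then show "(\<lambda>y. f y / (y + z) ^ (k + 1)) integrable_on cbox (-1) 1"
      unfolding box_real by (intro integrable_continuous_interval continuous_intros f) auto
  next
    show "continuous_on ({1<..} \<times> cbox (-1) 1) (\<lambda>(z, y). - ((real k + 1) * (f y / (y + z) ^ (k + 2))))"
      unfolding box_real split_beta
      by (intro continuous_intros continuous_on_compose2[OF f]) (auto simp: add_pos_pos)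
  qed (use x in auto)
  moreover have "integral {-1..1} (\<lambda>y. - ((real k + 1) * (f y / (y + x) ^ (k + 2))))
      = - ((real k + 1) * integral {-1..1} (\<lambda>y. f y / (y + x) ^ (k + 2)))"
    by (simp only: integral_neg integral_mult_right)
  moreover have "at x within {1<..} = at x"
    by (rule at_within_open) (use x in auto)
  ultimately show ?thesis
    by (simp only: box_real)
qed

lemma has_real_derivative_scaled_integral_div_power:
  fixes f :: "real \<Rightarrow> real"
  assumes f: "continuous_on {-1..1} f" and x: "x > 1"
  shows "((\<lambda>z. (-1) ^ k * fact k * integral {-1..1} (\<lambda>y. f y / (y + z) ^ (k + 1))) has_real_derivative
          (-1) ^ Suc k * fact (Suc k) * integral {-1..1} (\<lambda>y. f y / (y + x) ^ (Suc k + 1))) (at x)"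
  using DERIV_cmult[OF has_real_derivative_integral_div_power[OF f x, of k], of "(-1) ^ k * fact k"]
  by (simp add: algebra_simps)

lemma higher_deriv_integral_div:
  fixes f :: "real \<Rightarrow> real"
  assumes f: "continuous_on {-1..1} f" and x: "x > 1"
  shows "(deriv ^^ k) (\<lambda>z. integral {-1..1} (\<lambda>y. f y / (y + z))) x
       = (-1) ^ k * fact k * integral {-1..1} (\<lambda>y. f y / (y + x) ^ (k + 1))"
  using x
proof (induction k arbitrary: x)
  case 0
  then show ?case by simp
next
  case (Suc k)
  have "((deriv ^^ k) (\<lambda>z. integral {-1..1} (\<lambda>y. f y / (y + z))) has_real_derivative
      (-1) ^ Suc k * fact (Suc k) * integral {-1..1} (\<lambda>y. f y / (y + x) ^ (Suc k + 1))) (at x)"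
    by (rule has_field_derivative_transform_within_open[OF
          has_real_derivative_scaled_integral_div_power[OF f Suc.prems], where S = "{1<..}"])
      (use Suc in auto)
  then show ?case
    by (simp add: DERIV_imp_deriv)
qed

lemma smooth_on_integral_div:
  fixes f :: "real \<Rightarrow> real"
  assumes f: "continuous_on {-1..1} f"
  shows "smooth_on {1<..} (\<lambda>z. integral {-1..1} (\<lambda>y. f y / (y + z)))"
  unfolding smooth_on_def
proof (intro allI ballI)
  fix k and x :: real assume "x \<in> {1<..}"
  then have x: "x > 1" by simp
  have "((deriv ^^ k) (\<lambda>z. integral {-1..1} (\<lambda>y. f y / (y + z))) has_real_derivative
      (-1) ^ Suc k * fact (Suc k) * integral {-1..1} (\<lambda>y. f y / (y + x) ^ (Suc k + 1))) (at x)"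
    by (rule has_field_derivative_transform_within_open[OF
          has_real_derivative_scaled_integral_div_power[OF f x], where S = "{1<..}"])
      (use x higher_deriv_integral_div[OF f] in auto)
  then show "((deriv ^^ k) (\<lambda>z. integral {-1..1} (\<lambda>y. f y / (y + z))) has_real_derivative
      (deriv ^^ Suc k) (\<lambda>z. integral {-1..1} (\<lambda>y. f y / (y + z))) x) (at x)"
    by (simp only: higher_deriv_integral_div[OF f x])
qed

lemma smooth_on_phi: "smooth_on {1<..} (phi l)"
proof -
  have "continuous_on {-1..1} (legendre l)"
    unfolding legendre_def by (intro continuous_intros)
  then show ?thesis
    unfolding phi_def[abs_def] by (rule smooth_on_integral_div)
qed

theorem lemma9p3:
  shows
  "(\<forall>z>1. \<forall>l. odd l \<longrightarrow> phi l z < phi (l + 2) z \<and> phi l z < 0)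
   \<and> (\<forall>l. odd l \<longrightarrow>
        smooth_on {1<..} (phi l)
      \<and> strict_mono_on {1<..} (phi l)
      \<and> (phi l \<sim>[at_top] (\<lambda>z. - Anorm l / (z - 1) ^ (l + 1))))
   \<and> (\<forall>l. odd l \<longrightarrow>
        (\<forall>z>1. \<bar>phi l z\<bar> \<le> Anorm l / (z - 1) ^ (l + 1))
      \<and> (\<forall>z>1 + mstar. \<bar>phi l z\<bar> \<le> Cconst l * Anorm l / z ^ (l + 1)))"
  by (intro conjI allI impI phi_less_phi_add_2 phi_neg smooth_on_phi strict_mono_on_phi
      phi_asymp_equiv abs_phi_le abs_phi_le_Cconst) assumption+

end
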